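(* Let $a,a_1\in\mathbb{C}\setminus\{0,1\}$, $a\ne a_1$, and $\alpha,\beta,\gamma\in\mathbb{C}$ with $\gamma$ not a non-positive integer. Take $\varepsilon=-1$, $\varepsilon_1=0$, $\delta=2+\alpha+\beta-\gamma$ (so that $1+\alpha+\beta=\gamma+\delta+\varepsilon+\varepsilon_1$). Let $e_1\in\mathbb{C}$, $e_1\ne 0$ and not a negative integer, satisfy $$a(\alpha-e_1)(\beta-e_1)+(\gamma-1-e_1)e_1=0,$$ and set $$\theta_0=-aa_1\alpha\beta\,\frac{1+e_1}{e_1},\qquad \theta_1=a_1\alpha\beta-\frac{\theta_0}{a_1}.$$ Then $u(z)={}_3F_2(\alpha,\beta,1+e_1;\gamma,e_1;z)$ is a solution of equation (E). Moreover, the accessory parameter $\theta_0$ so defined satisfies $$\frac{\theta_0^2}{a_1^2}+\big(1+a(\alpha+\beta+2\alpha\beta)-\gamma\big)\frac{\theta_0}{a_1}+a\alpha\beta\big(a(1+\alpha)(1+\beta)-\gamma\big)=0.$$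
   Context: Equation (E) is $$\frac{d^2u}{dz^2}+\Big(\frac{\gamma}{z}+\frac{\delta}{z-1}+\frac{\varepsilon}{z-a}+\frac{\varepsilon_1}{z-a_1}\Big)\frac{du}{dz}+\frac{\alpha\beta z^2-\theta_1 z-\theta_0}{z(z-1)(z-a)(z-a_1)}\,u=0 .$$ The generalized hypergeometric series is ${}_rF_s(p_1,\dots,p_r;q_1,\dots,q_s;z)=\sum_{n\ge0}c_nz^n$ with $c_0=1$ and $c_n/c_{n-1}=\frac{1}{n}\prod_{k=1}^r(p_k-1+n)/\prod_{k=1}^s(q_k-1+n)$. *)

theory Defs
  imports "HOL-Analysis.Analysis"
begin

fun hyp_coeff :: "complex list \<Rightarrow> complex list \<Rightarrow> nat \<Rightarrow> complex" where
  "hyp_coeff ps qs 0 = 1"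
| "hyp_coeff ps qs (Suc n) =
     hyp_coeff ps qs n * (\<Prod>p\<leftarrow>ps. p + of_nat n) /
       (of_nat (Suc n) * (\<Prod>q\<leftarrow>qs. q + of_nat n))"

definition hypF :: "complex list \<Rightarrow> complex list \<Rightarrow> complex \<Rightarrow> complex" where
  "hypF ps qs z = (\<Sum>n. hyp_coeff ps qs n * z ^ n)"

end

theory Submission
  imports Defs
begin

text \<open>
  With \<open>\<theta>\<^sub>0 = -a\<^sub>1 q\<close> and \<open>\<theta>\<^sub>1 = a\<^sub>1 \<alpha>\<beta> + q\<close> the numerator
  \<open>\<alpha>\<beta> z\<^sup>2 - \<theta>\<^sub>1 z - \<theta>\<^sub>0\<close> factors as \<open>(z - a\<^sub>1)(\<alpha>\<beta> z - q)\<close>; since \<open>\<epsilon>\<^sub>1 = 0\<close>,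
  the point \<open>a\<^sub>1\<close> drops out and (E) becomes Heun's equation with singularities \<open>0, 1, a\<close>,
  \<open>\<epsilon> = -1\<close> and accessory parameter \<open>q = a\<alpha>\<beta>(1 + e\<^sub>1)/e\<^sub>1\<close>. A power series solves
  Heun's equation iff its coefficients satisfy the Heun three-term recurrence. The coefficients of
  \<open>\<^sub>3F\<^sub>2(\<alpha>, \<beta>, 1 + e\<^sub>1; \<gamma>, e\<^sub>1; z)\<close> satisfy a two-term recurrence, and the Heun recurrence at
  index \<open>m + 1\<close> is a linear combination of the two-term recurrences at \<open>m\<close> and \<open>m + 1\<close> and of
  the relation defining \<open>e\<^sub>1\<close>. The series converges on the unit disc by the ratio test.
  Eliminating \<open>e\<^sub>1\<close> between its defining relation and \<open>e\<^sub>1 q = a\<alpha>\<beta>(1 + e\<^sub>1)\<close> gives the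
  quadratic for \<open>\<theta>\<^sub>0/a\<^sub>1 = -q\<close>.
\<close>

lemma prod_list_map_divide:
  "(\<Prod>x\<leftarrow>xs. f x / d) = (\<Prod>x\<leftarrow>xs. f x) / (d :: 'a :: field) ^ length xs"
  by (induction xs) simp_all

lemma tendsto_prod_list_add_of_nat_divide:
  "(\<lambda>n. \<Prod>p\<leftarrow>ps. (p + of_nat n) / of_nat n :: 'a :: real_normed_field) \<longlonglongrightarrow> 1"
proof (induction ps)
  case (Cons p ps)
  have "(\<lambda>n. 1 + p / of_nat n :: 'a) \<longlonglongrightarrow> 1 + 0"
    by (intro tendsto_add tendsto_const tendsto_divide_0[OF tendsto_const] tendsto_of_nat)
  moreover have "\<forall>\<^sub>F n in sequentially. 1 + p / of_nat n = (p + of_nat n) / (of_nat n :: 'a)"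
    using eventually_gt_at_top[of 0] by eventually_elim (simp add: field_simps)
  ultimately have "(\<lambda>n. (p + of_nat n) / of_nat n :: 'a) \<longlonglongrightarrow> 1"
    by (simp add: tendsto_cong)
  from tendsto_mult[OF this Cons.IH] show ?case by simp
qed simp

lemma conv_radius_ge_1_if_norm_ratio_tendsto_1:
  fixes c R :: "nat \<Rightarrow> 'a :: {banach, real_normed_div_algebra}"
  assumes ratio: "\<And>n. c (Suc n) = c n * R n"
    and lim: "(\<lambda>n. norm (R n)) \<longlonglongrightarrow> 1"
  shows "1 \<le> conv_radius c"
proof (rule conv_radius_geI_ex')
  fix r :: real
  assume r: "0 < r" "ereal r < 1"
  define q where "q = (1 + 1 / r) / 2"
  have "1 < q" "q * r < 1"
    using r by (simp_all add: q_def field_simps)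
  then obtain N where N: "\<And>n. n \<ge> N \<Longrightarrow> norm (R n) < q"
    using order_tendstoD(2)[OF lim \<open>1 < q\<close>] by (auto simp: eventually_sequentially)
  show "summable (\<lambda>n. c n * of_real r ^ n)"
  proof (rule summable_ratio_test[of "q * r" N])
    fix n
    assume "n \<ge> N"
    then have "norm (c n) * norm (R n) * r ^ Suc n \<le> norm (c n) * q * r ^ Suc n"
      using N r by (intro mult_right_mono mult_left_mono) (auto simp: less_imp_le)
    then show "norm (c (Suc n) * of_real r ^ Suc n) \<le> q * r * norm (c n * of_real r ^ n)"
      using r by (simp add: ratio norm_mult norm_power algebra_simps)
  qed fact
qed

lemma hyp_coeff_ratio_tendsto:
  fixes ps qs :: "complex list"
  assumes "length ps = Suc (length qs)"
  shows "(\<lambda>n. norm ((\<Prod>p\<leftarrow>ps. p + of_nat n) / (of_nat (Suc n) * (\<Prod>q\<leftarrow>qs. q + of_nat n))))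
           \<longlonglongrightarrow> 1"
proof -
  let ?P = "\<lambda>n. \<Prod>p\<leftarrow>ps. (p + of_nat n) / of_nat n"
  let ?Q = "\<lambda>n. \<Prod>q\<leftarrow>qs. (q + of_nat n) / of_nat n"
  have "(\<lambda>n. ?P n / ((1 + of_nat n) / of_nat n * ?Q n)) \<longlonglongrightarrow> 1 / (1 * 1)"
    using tendsto_prod_list_add_of_nat_divide[of ps] tendsto_prod_list_add_of_nat_divide[of qs]
          tendsto_prod_list_add_of_nat_divide[of "[1]"]
    by (intro tendsto_intros) auto
  moreover have "\<forall>\<^sub>F n in sequentially. ?P n / ((1 + of_nat n) / of_nat n * ?Q n)
      = (\<Prod>p\<leftarrow>ps. p + of_nat n) / (of_nat (Suc n) * (\<Prod>q\<leftarrow>qs. q + of_nat n))"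
    using eventually_gt_at_top[of 0]
  proof eventually_elim
    case (elim n)
    then show ?case
      by (cases "(\<Prod>q\<leftarrow>qs. q + of_nat n) = 0") (simp_all add: prod_list_map_divide assms field_simps)
  qed
  ultimately have "(\<lambda>n. (\<Prod>p\<leftarrow>ps. p + of_nat n) / (of_nat (Suc n) * (\<Prod>q\<leftarrow>qs. q + of_nat n)))
      \<longlonglongrightarrow> 1"
    by (simp add: Lim_transform_eventually)
  from tendsto_norm[OF this] show ?thesis by simp
qed

lemma fps_conv_radius_hyp_coeff:
  assumes "length ps = Suc (length qs)"
  shows "1 \<le> fps_conv_radius (Abs_fps (hyp_coeff ps qs))"
  unfolding fps_conv_radius_def fps_nth_Abs_fps
  by (rule conv_radius_ge_1_if_norm_ratio_tendsto_1[OF _ hyp_coeff_ratio_tendsto[OF assms]])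
     simp

lemma hypF_eq_eval_fps: "hypF ps qs = eval_fps (Abs_fps (hyp_coeff ps qs))"
  by (simp add: fun_eq_iff hypF_def eval_fps_def)

lemma hyp_coeff_Suc_mult:
  assumes "\<forall>q\<in>set qs. q + of_nat n \<noteq> 0"
  shows "hyp_coeff ps qs (Suc n) * (of_nat (Suc n) * (\<Prod>q\<leftarrow>qs. q + of_nat n))
           = hyp_coeff ps qs n * (\<Prod>p\<leftarrow>ps. p + of_nat n)"
proof -
  have "(\<Prod>q\<leftarrow>qs. q + of_nat n) \<noteq> 0"
    using assms by (auto simp: prod_list_zero_iff)
  then show ?thesis
    by (simp del: of_nat_Suc)
qed

lemma eval_fps_of_poly_mult:
  fixes F :: "'a :: {banach, real_normed_div_algebra, comm_ring_1} fps"
  assumes "norm z < fps_conv_radius F"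
  shows "eval_fps (fps_of_poly p * F) z = poly p z * eval_fps F z"
  using assms by (simp add: eval_fps_mult)

lemma deriv_deriv_eval_fps:
  fixes F :: "'a :: {banach, real_normed_field} fps"
  assumes "norm z < fps_conv_radius F"
  shows "deriv (deriv (eval_fps F)) z = eval_fps (fps_deriv (fps_deriv F)) z"
proof -
  have "\<forall>\<^sub>F w in nhds z. w \<in> eball 0 (fps_conv_radius F)"
    using assms by (intro eventually_nhds_in_open) auto
  then have "\<forall>\<^sub>F w in nhds z. deriv (eval_fps F) w = eval_fps (fps_deriv F) w"
    by eventually_elim (simp add: eval_fps_deriv)
  then have "deriv (deriv (eval_fps F)) z = deriv (eval_fps (fps_deriv F)) z"
    by (rule deriv_cong_ev) simp
  also have "\<dots> = eval_fps (fps_deriv (fps_deriv F)) z"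
    using assms fps_conv_radius_deriv[of F] by (intro eval_fps_deriv [symmetric]) simp
  finally show ?thesis .
qed

lemma fps_nth_of_poly_pCons_mult_0: "fps_nth (fps_of_poly (pCons c p) * F) 0 = c * fps_nth F 0"
  by (simp add: fps_of_poly_pCons distrib_right)

lemma fps_nth_of_poly_pCons_mult_Suc:
  fixes F :: "'a :: comm_ring_1 fps"
  shows "fps_nth (fps_of_poly (pCons c p) * F) (Suc n)
           = c * fps_nth F (Suc n) + fps_nth (fps_of_poly p * F) n"
proof -
  have "fps_of_poly (pCons c p) * F = fps_const c * F + fps_X * (fps_of_poly p * F)"
    by (simp add: fps_of_poly_pCons algebra_simps)
  then show ?thesis
    by simp
qed

text \<open>
  Heun's operator multiplied by \<open>z(z - 1)(z - a)\<close>, acting on formal power series: the three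
  polynomials are \<open>z(z - 1)(z - a)\<close>, \<open>\<gamma>(z - 1)(z - a) + \<delta>z(z - a) + \<epsilon>z(z - 1)\<close> and
  \<open>\<rho>z - q\<close>, where \<open>\<rho>\<close> stands for the product \<open>\<alpha>\<beta>\<close> of the exponents at infinity.
\<close>

definition heun_fps ::
    "complex \<Rightarrow> complex \<Rightarrow> complex \<Rightarrow> complex \<Rightarrow> complex \<Rightarrow> complex \<Rightarrow> complex fps \<Rightarrow> complex fps"
  where
  "heun_fps a \<gamma> \<delta> \<epsilon> \<rho> q F =
     fps_of_poly [:0, a, -(1 + a), 1:] * fps_deriv (fps_deriv F)
   + fps_of_poly [:\<gamma> * a, -(\<gamma> * (1 + a) + \<delta> * a + \<epsilon>), \<gamma> + \<delta> + \<epsilon>:] * fps_deriv F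
   + fps_of_poly [:-q, \<rho>:] * F"

lemma eval_heun_fps:
  assumes "norm z < fps_conv_radius F"
  shows "eval_fps (heun_fps a \<gamma> \<delta> \<epsilon> \<rho> q F) z =
           z * (z - 1) * (z - a) * deriv (deriv (eval_fps F)) z
         + (\<gamma> * (z - 1) * (z - a) + \<delta> * z * (z - a) + \<epsilon> * z * (z - 1)) * deriv (eval_fps F) z
         + (\<rho> * z - q) * eval_fps F z"
proof -
  have r1: "norm z < fps_conv_radius (fps_deriv F)"
    using assms fps_conv_radius_deriv[of F] by (rule order.strict_trans2)
  then have r2: "norm z < fps_conv_radius (fps_deriv (fps_deriv F))"
    using fps_conv_radius_deriv[of "fps_deriv F"] by (rule order.strict_trans2)
  have r: "norm z < fps_conv_radius (fps_of_poly p * G)" if "norm z < fps_conv_radius G" for p and G :: "complex fps"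
    using that fps_conv_radius_mult[of "fps_of_poly p" G] by (simp add: order.strict_trans2)
  have r_add: "norm z < fps_conv_radius (G + H)"
    if "norm z < fps_conv_radius G" "norm z < fps_conv_radius H" for G H :: "complex fps"
    using that fps_conv_radius_add[of G H] by (meson min_less_iff_conj order.strict_trans2)
  have "eval_fps (heun_fps a \<gamma> \<delta> \<epsilon> \<rho> q F) z =
          poly [:0, a, -(1 + a), 1:] z * eval_fps (fps_deriv (fps_deriv F)) z
        + poly [:\<gamma> * a, -(\<gamma> * (1 + a) + \<delta> * a + \<epsilon>), \<gamma> + \<delta> + \<epsilon>:] z * eval_fps (fps_deriv F) z
        + poly [:-q, \<rho>:] z * eval_fps F z"
    unfolding heun_fps_def by (simp only: eval_fps_add r r_add eval_fps_of_poly_mult assms r1 r2)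
  then show ?thesis
    by (simp add: deriv_deriv_eval_fps[OF assms] eval_fps_deriv[OF assms] algebra_simps)
qed

lemma heun_equation_if_heun_fps_eq_0:
  assumes "heun_fps a \<gamma> \<delta> \<epsilon> \<rho> q F = 0" "norm z < fps_conv_radius F"
    and "z \<noteq> 0" "z \<noteq> 1" "z \<noteq> a"
  shows "deriv (deriv (eval_fps F)) z + (\<gamma> / z + \<delta> / (z - 1) + \<epsilon> / (z - a)) * deriv (eval_fps F) z
           + (\<rho> * z - q) / (z * (z - 1) * (z - a)) * eval_fps F z = 0"
proof -
  define w\<^sub>1 w\<^sub>a where "w\<^sub>1 = z - 1" and "w\<^sub>a = z - a"
  have "w\<^sub>1 \<noteq> 0" "w\<^sub>a \<noteq> 0"
    using assms(4,5) by (simp_all add: w\<^sub>1_def w\<^sub>a_def)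
  have "z * w\<^sub>1 * w\<^sub>a * deriv (deriv (eval_fps F)) z
        + (\<gamma> * w\<^sub>1 * w\<^sub>a + \<delta> * z * w\<^sub>a + \<epsilon> * z * w\<^sub>1) * deriv (eval_fps F) z
        + (\<rho> * z - q) * eval_fps F z = 0"
    using eval_heun_fps[OF assms(2), of a \<gamma> \<delta> \<epsilon> \<rho> q] assms(1) by (simp add: w\<^sub>1_def w\<^sub>a_def)
  moreover have "deriv (deriv (eval_fps F)) z + (\<gamma> / z + \<delta> / w\<^sub>1 + \<epsilon> / w\<^sub>a) * deriv (eval_fps F) z
           + (\<rho> * z - q) / (z * w\<^sub>1 * w\<^sub>a) * eval_fps F z
      = (z * w\<^sub>1 * w\<^sub>a * deriv (deriv (eval_fps F)) z
        + (\<gamma> * w\<^sub>1 * w\<^sub>a + \<delta> * z * w\<^sub>a + \<epsilon> * z * w\<^sub>1) * deriv (eval_fps F) z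
        + (\<rho> * z - q) * eval_fps F z) / (z * w\<^sub>1 * w\<^sub>a)"
    using assms(3) \<open>w\<^sub>1 \<noteq> 0\<close> \<open>w\<^sub>a \<noteq> 0\<close> by (simp add: field_simps)
  ultimately show ?thesis
    unfolding w\<^sub>1_def w\<^sub>a_def by simp
qed

lemma fps_nth_heun_fps_0: "fps_nth (heun_fps a \<gamma> \<delta> \<epsilon> \<rho> q F) 0 = a * \<gamma> * fps_nth F 1 - q * fps_nth F 0"
  by (simp add: heun_fps_def fps_nth_of_poly_pCons_mult_0 algebra_simps)

lemma fps_nth_heun_fps_Suc:
  "fps_nth (heun_fps a \<gamma> \<delta> \<epsilon> \<rho> q F) (Suc m) =
       a * (of_nat m + 2) * (of_nat m + 1 + \<gamma>) * fps_nth F (m + 2)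
     - ((of_nat m + 1) * ((1 + a) * (of_nat m + \<gamma>) + a * \<delta> + \<epsilon>) + q) * fps_nth F (m + 1)
     + (of_nat m * (of_nat m - 1 + \<gamma> + \<delta> + \<epsilon>) + \<rho>) * fps_nth F m"
proof -
  consider "m = 0" | "m = 1" | k where "m = Suc (Suc k)"
    by (metis One_nat_def not0_implies_Suc)
  then show ?thesis
    by cases (simp add: heun_fps_def fps_nth_of_poly_pCons_mult_0 fps_nth_of_poly_pCons_mult_Suc,
              simp add: algebra_simps)+
qed

lemma heun_fps_hyp_coeff_eq_0:
  fixes a \<alpha> \<beta> \<gamma> e q :: complex
  assumes \<gamma>: "\<And>n. \<gamma> + of_nat n \<noteq> 0" and e: "\<And>n. e + of_nat n \<noteq> 0"
    and e_eq: "a * (\<alpha> - e) * (\<beta> - e) + (\<gamma> - 1 - e) * e = 0"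
    and q: "e * q = a * \<alpha> * \<beta> * (1 + e)"
  shows "heun_fps a \<gamma> (2 + \<alpha> + \<beta> - \<gamma>) (-1) (\<alpha> * \<beta>) q
           (Abs_fps (hyp_coeff [\<alpha>, \<beta>, 1 + e] [\<gamma>, e])) = 0"
proof (rule fps_ext)
  define c where "c = hyp_coeff [\<alpha>, \<beta>, 1 + e] [\<gamma>, e]"
  have rec: "c (Suc n) * ((of_nat n + 1) * (\<gamma> + of_nat n) * (e + of_nat n))
               - c n * ((\<alpha> + of_nat n) * (\<beta> + of_nat n) * (1 + e + of_nat n)) = 0" for n
    using hyp_coeff_Suc_mult[of "[\<gamma>, e]" n "[\<alpha>, \<beta>, 1 + e]"] \<gamma> e by (simp add: c_def algebra_simps)
  have "e \<noteq> 0"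
    using e[of 0] by simp
  fix n
  show "fps_nth (heun_fps a \<gamma> (2 + \<alpha> + \<beta> - \<gamma>) (-1) (\<alpha> * \<beta>) q (Abs_fps c)) n = fps_nth 0 n"
  proof (cases n)
    case 0
    have "e * (a * \<gamma> * c 1 - q * c 0) = a * (c 1 * (1 * \<gamma> * e) - c 0 * (\<alpha> * \<beta> * (1 + e)))"
      using q by (simp add: c_def algebra_simps)
    also have "\<dots> = 0"
      using rec[of 0] by simp
    finally show ?thesis
      using 0 \<open>e \<noteq> 0\<close> by (simp add: fps_nth_heun_fps_0)
  next
    case (Suc m)
    define M :: complex where "M = of_nat m"
    \<comment> \<open>combination of the recurrences at \<open>m + 1\<close> and \<open>m\<close> and the relations for \<open>e\<close> and \<open>q\<close>\<close>
    have "e * (e + M + 1) * fps_nth (heun_fps a \<gamma> (2 + \<alpha> + \<beta> - \<gamma>) (-1) (\<alpha> * \<beta>) q (Abs_fps c)) (Suc m)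
        = a * e * (c (m + 2) * ((M + 2) * (\<gamma> + M + 1) * (e + M + 1))
                   - c (m + 1) * ((\<alpha> + M + 1) * (\<beta> + M + 1) * (1 + e + M + 1)))
          - e * (c (m + 1) * ((M + 1) * (\<gamma> + M) * (e + M)) - c m * ((\<alpha> + M) * (\<beta> + M) * (1 + e + M)))
          - c (m + 1) * ((M + 1) * (a * (\<alpha> - e) * (\<beta> - e) + (\<gamma> - 1 - e) * e)
                         + (e + M + 1) * (e * q - a * \<alpha> * \<beta> * (1 + e)))"
      unfolding fps_nth_heun_fps_Suc fps_nth_Abs_fps M_def[symmetric] by algebra
    also have "\<dots> = 0"
      using rec[of m] rec[of "Suc m"] e_eq q by (simp add: M_def algebra_simps)
    finally show ?thesis
      using Suc \<open>e \<noteq> 0\<close> e[of "Suc m"] by (simp add: M_def ac_simps)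
  qed
qed

lemma accessory_parameter_quadratic:
  fixes a \<alpha> \<beta> \<gamma> e q :: complex
  assumes "e \<noteq> 0" and e_eq: "a * (\<alpha> - e) * (\<beta> - e) + (\<gamma> - 1 - e) * e = 0"
    and q: "e * q = a * \<alpha> * \<beta> * (1 + e)"
  shows "q\<^sup>2 - (1 + a * (\<alpha> + \<beta> + 2 * \<alpha> * \<beta>) - \<gamma>) * q
           + a * \<alpha> * \<beta> * (a * (1 + \<alpha>) * (1 + \<beta>) - \<gamma>) = 0"
proof -
  have "e\<^sup>2 * (q\<^sup>2 - (1 + a * (\<alpha> + \<beta> + 2 * \<alpha> * \<beta>) - \<gamma>) * q + a * \<alpha> * \<beta> * (a * (1 + \<alpha>) * (1 + \<beta>) - \<gamma>))
      = (e * q)\<^sup>2 - (1 + a * (\<alpha> + \<beta> + 2 * \<alpha> * \<beta>) - \<gamma>) * e * (e * q)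
        + e\<^sup>2 * a * \<alpha> * \<beta> * (a * (1 + \<alpha>) * (1 + \<beta>) - \<gamma>)"
    by algebra
  also have "\<dots> = a * \<alpha> * \<beta> * (a * (\<alpha> - e) * (\<beta> - e) + (\<gamma> - 1 - e) * e)"
    unfolding q by algebra
  finally show ?thesis
    using \<open>e \<noteq> 0\<close> e_eq by simp
qed

theorem mainTheorem2:
  fixes a a\<^sub>1 \<alpha> \<beta> \<gamma> \<delta> \<epsilon> \<epsilon>\<^sub>1 e\<^sub>1 \<theta>\<^sub>0 \<theta>\<^sub>1 :: complex
    and u :: "complex \<Rightarrow> complex"
  assumes ha: "a \<noteq> 0" "a \<noteq> 1"
    and ha1: "a\<^sub>1 \<noteq> 0" "a\<^sub>1 \<noteq> 1"
    and haa1: "a \<noteq> a\<^sub>1"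
    and hgamma: "\<forall>n::nat. \<gamma> \<noteq> - of_nat n"
    and heps: "\<epsilon> = -1" and heps1: "\<epsilon>\<^sub>1 = 0"
    and hdelta: "\<delta> = 2 + \<alpha> + \<beta> - \<gamma>"
    and he1: "e\<^sub>1 \<noteq> 0" "\<forall>n::nat. e\<^sub>1 \<noteq> - of_nat (Suc n)"
    and he1eq: "a * (\<alpha> - e\<^sub>1) * (\<beta> - e\<^sub>1) + (\<gamma> - 1 - e\<^sub>1) * e\<^sub>1 = 0"
    and htheta0: "\<theta>\<^sub>0 = - a * a\<^sub>1 * \<alpha> * \<beta> * (1 + e\<^sub>1) / e\<^sub>1"
    and htheta1: "\<theta>\<^sub>1 = a\<^sub>1 * \<alpha> * \<beta> - \<theta>\<^sub>0 / a\<^sub>1"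
    and hu: "u = hypF [\<alpha>, \<beta>, 1 + e\<^sub>1] [\<gamma>, e\<^sub>1]"
  shows "u holomorphic_on ball 0 1 \<and>
    (\<forall>z. norm z < 1 \<and> z \<noteq> 0 \<and> z \<noteq> a \<and> z \<noteq> a\<^sub>1 \<longrightarrow>
       deriv (deriv u) z
       + (\<gamma> / z + \<delta> / (z - 1) + \<epsilon> / (z - a) + \<epsilon>\<^sub>1 / (z - a\<^sub>1)) * deriv u z
       + (\<alpha> * \<beta> * z\<^sup>2 - \<theta>\<^sub>1 * z - \<theta>\<^sub>0) / (z * (z - 1) * (z - a) * (z - a\<^sub>1)) * u z = 0)
    \<and> \<theta>\<^sub>0\<^sup>2 / a\<^sub>1\<^sup>2 + (1 + a * (\<alpha> + \<beta> + 2 * \<alpha> * \<beta>) - \<gamma>) * (\<theta>\<^sub>0 / a\<^sub>1)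
       + a * \<alpha> * \<beta> * (a * (1 + \<alpha>) * (1 + \<beta>) - \<gamma>) = 0"
proof -
  define q where "q = - \<theta>\<^sub>0 / a\<^sub>1"
  define F where "F = Abs_fps (hyp_coeff [\<alpha>, \<beta>, 1 + e\<^sub>1] [\<gamma>, e\<^sub>1])"
  have radius: "1 \<le> fps_conv_radius F"
    unfolding F_def by (rule fps_conv_radius_hyp_coeff) simp
  have in_disc: "norm z < fps_conv_radius F" if "norm z < 1" for z
    using that by (intro order.strict_trans2[OF _ radius]) simp
  have u: "u = eval_fps F"
    by (simp add: hu F_def hypF_eq_eval_fps)
  have e1_q: "e\<^sub>1 * q = a * \<alpha> * \<beta> * (1 + e\<^sub>1)"
    using ha1(1) he1(1) by (simp add: q_def htheta0 field_simps)
  have e1_shift: "e\<^sub>1 + of_nat n \<noteq> 0" for n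
    using he1(1) he1(2)[rule_format, of "n - 1"]
    by (cases n) (simp_all add: eq_neg_iff_add_eq_0 del: of_nat_Suc)
  have heun: "heun_fps a \<gamma> \<delta> \<epsilon> (\<alpha> * \<beta>) q F = 0"
    unfolding F_def hdelta heps
    using hgamma e1_shift he1eq e1_q by (intro heun_fps_hyp_coeff_eq_0) (simp_all add: eq_neg_iff_add_eq_0)
  have potential: "(\<alpha> * \<beta> * z\<^sup>2 - \<theta>\<^sub>1 * z - \<theta>\<^sub>0) / (z * (z - 1) * (z - a) * (z - a\<^sub>1))
                   = (\<alpha> * \<beta> * z - q) / (z * (z - 1) * (z - a))" if "z \<noteq> a\<^sub>1" for z
  proof -
    have "\<alpha> * \<beta> * z\<^sup>2 - \<theta>\<^sub>1 * z - \<theta>\<^sub>0 = (\<alpha> * \<beta> * z - q) * (z - a\<^sub>1)"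
      using ha1(1) by (simp add: htheta1 q_def field_simps power2_eq_square)
    with that show ?thesis
      by simp
  qed
  have "u holomorphic_on ball 0 1"
    unfolding u by (intro holomorphic_on_eval_fps) (auto intro: in_disc)
  moreover have "\<theta>\<^sub>0\<^sup>2 / a\<^sub>1\<^sup>2 + (1 + a * (\<alpha> + \<beta> + 2 * \<alpha> * \<beta>) - \<gamma>) * (\<theta>\<^sub>0 / a\<^sub>1)
       + a * \<alpha> * \<beta> * (a * (1 + \<alpha>) * (1 + \<beta>) - \<gamma>) = 0"
    using accessory_parameter_quadratic[OF he1(1) he1eq e1_q] by (simp add: q_def power_divide)
  ultimately show ?thesis
    using heun_equation_if_heun_fps_eq_0[OF heun in_disc] by (fastforce simp: u heps1 potential)
qed

end
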